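(* The stationary distribution $\pi$ of the Markov chain $\mathcal{M}$ with bias parameter $\lambda>0$ is $\pi(\sigma)=\lambda^{t(\sigma)}/Z$ for $\sigma\in\Omega$, where $Z=\sum_{\sigma\in\Omega}\lambda^{t(\sigma)}$.
   Context: Let $\Gamma$ be the triangular lattice. A configuration of $n$ particles is a set of $n$ vertices ("locations") of $\Gamma$, considered up to translation. It is connected if the subgraph induced by occupied locations is connected; a hole is a maximal finite connected set of unoccupied locations; $\Omega$ is the set of connected configurations of $n$ particles with no holes. $t(\sigma)$ is the number of triangular faces of $\Gamma$ with all three vertices occupied. For a location $\ell$, $N(\ell)$ is the set of particles at locations adjacent to $\ell$. For adjacent $\ell,\ell'$, let $\mathbb{S}=N(\ell)\cap N(\ell')$ and $N(\ell\cup\ell')=(N(\ell)\cup N(\ell'))$ minus particles located at $\ell$ or $\ell'$. Property 1: $|\mathbb{S}|\in\{1,2\}$ and every particle in $N(\ell\cup\ell')$ is connected to a particle of $\mathbb{S}$ by a lattice path all of whose vertices are particles of $N(\ell\cup\ell')$. Property 2: $|\mathbb{S}|=0$; each of $\ell,\ell'$ has at least one adjacent particle other than one located at the other location; the particles of $N(\ell)$ not at $\ell'$ are connected by paths within this set; the particles of $N(\ell')$ not at $\ell$ are connected by paths within this set. One step of $\mathcal{M}$ from $\sigma$: choose a particle $P$ uniformly (location $\ell$), a neighbor $\ell'$ of $\ell$ uniformly among six, and $q$ uniform in $(0,1)$. If $\ell'$ is occupied, do nothing. Otherwise let $t$ (resp. $t'$) be the number of triangular faces incident to $\ell$ (resp.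 $\ell'$) with all three vertices occupied when $P$ is at $\ell$ (resp. at $\ell'$); move $P$ to $\ell'$ if (1) $\ell$ does not have exactly five occupied neighbors, (2) $\ell,\ell'$ satisfy Property 1 or 2, and (3) $q<\lambda^{t'-t}$; else do nothing. *)

theory Defs
  imports Complex_Main
begin

text \<open>Locations of the triangular lattice are encoded in axial coordinates as
  pairs of integers; the six neighbours of (x,y) are obtained by adding the six
  direction vectors below.\<close>

type_synonym loc = "int \<times> int"

definition addl :: "loc \<Rightarrow> loc \<Rightarrow> loc" where
  "addl a b = (fst a + fst b, snd a + snd b)"

definition dirs :: "loc set" where
  "dirs = {(1,0), (0,1), (-1,1), (-1,0), (0,-1), (1,-1)}"

definition adj :: "loc \<Rightarrow> loc \<Rightarrow> bool" where
  "adj a b \<longleftrightarrow> (\<exists>d\<in>dirs. b = addl a d)"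

text \<open>Triangular faces: up-triangles and down-triangles.\<close>
definition face :: "loc set \<Rightarrow> bool" where
  "face T \<longleftrightarrow> (\<exists>v. T = {v, addl v (1,0), addl v (0,1)} \<or> T = {v, addl v (1,0), addl v (1,-1)})"

definition path_in :: "loc set \<Rightarrow> loc \<Rightarrow> loc \<Rightarrow> bool" where
  "path_in A = (\<lambda>x y. x \<in> A \<and> y \<in> A \<and> adj x y)\<^sup>*\<^sup>*"

definition lconnected :: "loc set \<Rightarrow> bool" where
  "lconnected A \<longleftrightarrow> (\<forall>a\<in>A. \<forall>b\<in>A. path_in A a b)"

text \<open>A hole is a finite connected component of the unoccupied locations.\<close>
definition no_holes :: "loc set \<Rightarrow> bool" where
  "no_holes S \<longleftrightarrow> (\<forall>x. x \<notin> S \<longrightarrow> infinite {y. path_in (- S) x y})"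

definition tri :: "loc set \<Rightarrow> nat" where
  "tri S = card {T. face T \<and> T \<subseteq> S}"

definition shift :: "loc \<Rightarrow> loc set \<Rightarrow> loc set" where
  "shift v S = (\<lambda>p. addl p v) ` S"

text \<open>A configuration is the translation class of a set of locations.\<close>
definition cls :: "loc set \<Rightarrow> loc set set" where
  "cls S = {shift v S | v. True}"

definition Omega :: "nat \<Rightarrow> loc set set set" where
  "Omega n = {cls S | S. finite S \<and> card S = n \<and> lconnected S \<and> no_holes S}"

definition rep :: "loc set set \<Rightarrow> loc set" where
  "rep \<sigma> = (SOME S. S \<in> \<sigma>)"

definition tcfg :: "loc set set \<Rightarrow> nat" where
  "tcfg \<sigma> = tri (rep \<sigma>)"

definition Nb :: "loc set \<Rightarrow> loc \<Rightarrow> loc set" where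
  "Nb S l = {p \<in> S. adj l p}"

definition property1 :: "loc set \<Rightarrow> loc \<Rightarrow> loc \<Rightarrow> bool" where
  "property1 S l l' \<longleftrightarrow>
     (let C = Nb S l \<inter> Nb S l'; U = (Nb S l \<union> Nb S l') - {l, l'} in
      card C \<in> {1, 2} \<and> (\<forall>p\<in>U. \<exists>s\<in>C. path_in U p s))"

definition property2 :: "loc set \<Rightarrow> loc \<Rightarrow> loc \<Rightarrow> bool" where
  "property2 S l l' \<longleftrightarrow>
     card (Nb S l \<inter> Nb S l') = 0 \<and>
     Nb S l - {l'} \<noteq> {} \<and> Nb S l' - {l} \<noteq> {} \<and>
     lconnected (Nb S l - {l'}) \<and> lconnected (Nb S l' - {l})"

definition moved :: "loc set \<Rightarrow> loc \<Rightarrow> loc \<Rightarrow> loc set" where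
  "moved S l l' = insert l' (S - {l})"

definition tri_at :: "loc set \<Rightarrow> loc \<Rightarrow> nat" where
  "tri_at S l = card {T. face T \<and> l \<in> T \<and> T \<subseteq> S}"

definition move_ok :: "loc set \<Rightarrow> loc \<Rightarrow> loc \<Rightarrow> bool" where
  "move_ok S l l' \<longleftrightarrow> card (Nb S l) \<noteq> 5 \<and> (property1 S l l' \<or> property2 S l l')"

text \<open>Probability that q uniform in (0,1) satisfies q < lambda^(t'-t).\<close>
definition acc :: "real \<Rightarrow> loc set \<Rightarrow> loc \<Rightarrow> loc \<Rightarrow> real" where
  "acc lam S l l' = min 1 (lam powi (int (tri_at (moved S l l') l') - int (tri_at S l)))"

definition ind :: "bool \<Rightarrow> real" where
  "ind b = (if b then 1 else 0)"

text \<open>One-step transition probability from (a representative S of) a configuration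
  to the configuration tau: particle chosen uniformly, direction uniformly among six.\<close>
definition step_prob :: "real \<Rightarrow> loc set \<Rightarrow> loc set set \<Rightarrow> real" where
  "step_prob lam S \<tau> =
     (\<Sum>p\<in>S. \<Sum>d\<in>dirs. (1 / (6 * real (card S))) *
        (let l' = addl p d in
         if l' \<in> S then ind (cls S = \<tau>)
         else if move_ok S p l'
           then acc lam S p l' * ind (cls (moved S p l') = \<tau>)
                + (1 - acc lam S p l') * ind (cls S = \<tau>)
           else ind (cls S = \<tau>)))"

definition Pchain :: "real \<Rightarrow> loc set set \<Rightarrow> loc set set \<Rightarrow> real" where
  "Pchain lam \<sigma> \<tau> = step_prob lam (rep \<sigma>) \<tau>"

definition Zpart :: "real \<Rightarrow> nat \<Rightarrow> real" where
  "Zpart lam n = (\<Sum>\<sigma>\<in>Omega n. lam ^ tcfg \<sigma>)"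

definition piM :: "real \<Rightarrow> nat \<Rightarrow> loc set set \<Rightarrow> real" where
  "piM lam n \<sigma> = lam ^ tcfg \<sigma> / Zpart lam n"

end

theory Submission
  imports Defs
begin

text \<open>The chain is reversible with respect to the weights \<open>\<lambda>^t(\<sigma>)\<close>, which gives stationarity
  by summing the detailed balance equations over \<open>\<sigma>\<close> and using that every row of the transition
  matrix sums to one. Detailed balance rests on two facts about a valid move of a particle from
  \<open>\<ell>\<close> to \<open>\<ell>'\<close> in a configuration \<open>\<sigma> \<in> \<Omega>\<close>. First, the new configuration \<open>\<tau>\<close> is again in \<open>\<Omega>\<close> and the
  move back from \<open>\<ell>'\<close> to \<open>\<ell>\<close> is valid in \<open>\<tau>\<close>; this is a local statement about the neighbours of
  \<open>\<ell>\<close> and \<open>\<ell>'\<close>, which by a lattice symmetry reduces to \<open>\<ell> = (0,0)\<close>, \<open>\<ell>' = (1,0)\<close> and a finite case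
  analysis driven by Properties 1 and 2. Second, \<open>t(\<tau>) - t(\<sigma>)\<close> equals the change \<open>t' - t\<close> of the
  triangles incident to the moving particle, so the Metropolis acceptance probabilities satisfy
  \<open>\<lambda>^t(\<sigma>) min(1, \<lambda>^(t'-t)) = \<lambda>^t(\<tau>) min(1, \<lambda>^(t-t'))\<close>. Moves from \<open>\<sigma>\<close> to \<open>\<tau>\<close> and back are then
  matched bijectively, up to the translation relating the chosen representatives.\<close>

section \<open>Lattice geometry and paths\<close>

definition negl :: "loc \<Rightarrow> loc" where
  "negl v = (- fst v, - snd v)"

lemma addl_eq_iff: "b = addl a d \<longleftrightarrow> d = (fst b - fst a, snd b - snd a)"
  by (auto simp: addl_def prod_eq_iff)

lemma addl_negl: "addl (addl p d) (negl d) = p"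
  by (simp add: addl_def negl_def)

lemma negl_negl [simp]: "negl (negl d) = d"
  by (simp add: negl_def)

lemma negl_dirs: "d \<in> dirs \<Longrightarrow> negl d \<in> dirs"
  by (auto simp: dirs_def negl_def)

lemma adj_iff: "adj a b \<longleftrightarrow> (fst b - fst a, snd b - snd a) \<in> dirs"
  unfolding adj_def addl_eq_iff by simp

lemma adj_sym: "adj a b \<Longrightarrow> adj b a"
  unfolding adj_def by (metis addl_negl negl_dirs)

lemma adj_irrefl: "\<not> adj a a"
  by (auto simp: adj_iff dirs_def)

lemma adj_iff_nbr: "adj a b \<longleftrightarrow> b \<in> addl a ` dirs"
  by (auto simp: adj_def)

lemma finite_dirs [simp]: "finite dirs"
  by (simp add: dirs_def)

lemma card_dirs: "card dirs = 6"
  by (simp add: dirs_def)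

lemma inj_addl: "inj (addl a)"
  by (auto simp: inj_def addl_def prod_eq_iff)

lemma card_nbrs_but_one:
  assumes "adj a b" shows "card (addl a ` dirs - {b}) = 5"
proof -
  have "card (addl a ` dirs) = 6"
    using card_image[OF inj_on_subset[OF inj_addl subset_UNIV]] card_dirs by metis
  moreover have "b \<in> addl a ` dirs" using assms adj_iff_nbr by blast
  ultimately show ?thesis by (simp add: card_Diff_singleton)
qed

lemma Nb_subset_nbrs: "Nb S l \<subseteq> addl l ` dirs"
  by (auto simp: Nb_def adj_iff_nbr)

lemma path_in_refl [simp]: "path_in A x x"
  by (simp add: path_in_def)

lemma path_in_step: "x \<in> A \<Longrightarrow> y \<in> A \<Longrightarrow> adj x y \<Longrightarrow> path_in A x y"
  by (simp add: path_in_def r_into_rtranclp)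

lemma path_in_trans: "path_in A x y \<Longrightarrow> path_in A y z \<Longrightarrow> path_in A x z"
  unfolding path_in_def by (rule rtranclp_trans)

lemma path_in_sym: "path_in A x y \<Longrightarrow> path_in A y x"
  unfolding path_in_def
proof (induction rule: rtranclp_induct)
  case (step y z)
  then show ?case
    by (intro converse_rtranclp_into_rtranclp[of _ z y]) (auto simp: adj_sym)
qed simp

lemma path_in_mono: "path_in A x y \<Longrightarrow> A \<subseteq> B \<Longrightarrow> path_in B x y"
  unfolding path_in_def
proof (induction rule: rtranclp_induct)
  case (step y z)
  then show ?case by (intro rtranclp.rtrancl_into_rtrancl[of _ x y z]) auto
qed simp

lemma path_in_closed:
  assumes "path_in A x y" "x \<in> K" "\<And>k q. k \<in> K \<Longrightarrow> q \<in> A \<Longrightarrow> adj k q \<Longrightarrow> q \<in> K"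
  shows "y \<in> K"
  using assms(1,2) unfolding path_in_def
  by (induction rule: rtranclp_induct) (auto intro: assms(3))

text \<open>A path in \<open>A\<close> between points other than \<open>z\<close> survives removing \<open>z\<close> from \<open>A\<close>, provided
  the neighbours of \<open>z\<close> in \<open>A\<close> are already connected without it: each visit to \<open>z\<close> is
  replaced by a detour.\<close>

lemma path_in_detour:
  assumes sub: "A - {z} \<subseteq> B"
    and nbrs: "\<And>u w. u \<in> A \<Longrightarrow> w \<in> A \<Longrightarrow> adj z u \<Longrightarrow> adj z w \<Longrightarrow> path_in B u w"
    and p: "path_in A a y" and "a \<noteq> z" "y \<noteq> z"
  shows "path_in B a y"
proof -
  have "(y \<noteq> z \<longrightarrow> path_in B a y) \<and> (y = z \<longrightarrow> (\<forall>w\<in>A. adj z w \<longrightarrow> path_in B a w))"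
    using p unfolding path_in_def[of A]
  proof (induction rule: rtranclp_induct)
    case base then show ?case using \<open>a \<noteq> z\<close> by simp
  next
    case (step y y')
    then have y: "y \<in> A" "y' \<in> A" "adj y y'" by auto
    show ?case
    proof (cases "y = z")
      case True
      then show ?thesis using step y by auto
    next
      case False
      then have IH: "path_in B a y" using step by auto
      show ?thesis
      proof (cases "y' = z")
        case True
        then show ?thesis using IH nbrs[of y] y False by (metis adj_sym path_in_trans)
      next
        case False
        then have "path_in B y y'" using \<open>y \<noteq> z\<close> y sub by (intro path_in_step) auto
        then show ?thesis using IH False path_in_trans by blast
      qed
    qed
  qed
  then show ?thesis using \<open>y \<noteq> z\<close> by blast
qed

section \<open>Lattice automorphisms\<close>

definition lattice_aut :: "(loc \<Rightarrow> loc) \<Rightarrow> bool" where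
  "lattice_aut f \<longleftrightarrow> bij f \<and> (\<forall>a b. adj (f a) (f b) = adj a b)"

lemma lattice_aut_inj: "lattice_aut f \<Longrightarrow> inj f"
  by (simp add: lattice_aut_def bij_is_inj)

lemma lattice_aut_adj: "lattice_aut f \<Longrightarrow> adj (f a) (f b) = adj a b"
  unfolding lattice_aut_def by blast

lemma lattice_aut_inv: "lattice_aut f \<Longrightarrow> lattice_aut (inv f)"
  unfolding lattice_aut_def by (metis bij_imp_bij_inv bij_inv_eq_iff)

lemma lattice_aut_comp: "lattice_aut f \<Longrightarrow> lattice_aut g \<Longrightarrow> lattice_aut (f \<circ> g)"
  unfolding lattice_aut_def by (metis bij_comp comp_apply)

lemma lattice_aut_funpow: "lattice_aut f \<Longrightarrow> lattice_aut (f ^^ k)"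
  by (induction k) (simp_all add: lattice_aut_comp lattice_aut_def[of id])

lemma lattice_aut_card_image: "lattice_aut f \<Longrightarrow> card (f ` A) = card A"
  by (meson card_image inj_on_subset lattice_aut_inj subset_UNIV)

lemma lattice_aut_image_Compl: "lattice_aut f \<Longrightarrow> - (f ` S) = f ` (- S)"
  by (simp add: lattice_aut_def bij_image_Compl_eq)

lemma path_in_image:
  assumes "lattice_aut f" "path_in A a b" shows "path_in (f ` A) (f a) (f b)"
  using assms(2) unfolding path_in_def
proof (induction rule: rtranclp_induct)
  case (step y z)
  then show ?case using lattice_aut_adj[OF assms(1)]
    by (intro rtranclp.rtrancl_into_rtrancl[of _ "f a" "f y" "f z"]) auto
qed simp

lemma path_in_image_iff:
  assumes "lattice_aut f" shows "path_in (f ` A) (f a) (f b) \<longleftrightarrow> path_in A a b"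
proof
  assume "path_in (f ` A) (f a) (f b)"
  from path_in_image[OF lattice_aut_inv[OF assms] this] show "path_in A a b"
    using assms by (simp add: lattice_aut_inj image_image)
qed (rule path_in_image[OF assms])

lemma lconnected_image: "lattice_aut f \<Longrightarrow> lconnected (f ` A) \<longleftrightarrow> lconnected A"
  by (simp add: lconnected_def path_in_image_iff)

lemma Nb_image: "lattice_aut f \<Longrightarrow> Nb (f ` S) (f l) = f ` Nb S l"
  by (auto simp: Nb_def lattice_aut_adj)

lemma property1_image:
  assumes f: "lattice_aut f"
  shows "property1 (f ` S) (f l) (f l') \<longleftrightarrow> property1 S l l'"
proof -
  have C: "Nb (f ` S) (f l) \<inter> Nb (f ` S) (f l') = f ` (Nb S l \<inter> Nb S l')"
    using f by (simp add: Nb_image image_Int lattice_aut_inj)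
  have U: "(Nb (f ` S) (f l) \<union> Nb (f ` S) (f l')) - {f l, f l'} = f ` ((Nb S l \<union> Nb S l') - {l, l'})"
    using f by (simp add: Nb_image image_set_diff lattice_aut_inj image_Un)
  show ?thesis unfolding property1_def Let_def C U
    using f by (simp add: lattice_aut_card_image path_in_image_iff)
qed

lemma property2_image:
  assumes f: "lattice_aut f"
  shows "property2 (f ` S) (f l) (f l') \<longleftrightarrow> property2 S l l'"
proof -
  have "Nb (f ` S) (f l) \<inter> Nb (f ` S) (f l') = f ` (Nb S l \<inter> Nb S l')"
    "Nb (f ` S) (f l) - {f l'} = f ` (Nb S l - {l'})"
    "Nb (f ` S) (f l') - {f l} = f ` (Nb S l' - {l})"
    using f by (simp_all add: Nb_image image_Int image_set_diff lattice_aut_inj)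
  then show ?thesis unfolding property2_def
    using f by (simp add: lattice_aut_card_image lconnected_image)
qed

lemma move_ok_image:
  "lattice_aut f \<Longrightarrow> move_ok (f ` S) (f l) (f l') \<longleftrightarrow> move_ok S l l'"
  by (simp add: move_ok_def Nb_image lattice_aut_card_image property1_image property2_image)

lemma moved_image: "lattice_aut f \<Longrightarrow> moved (f ` S) (f l) (f l') = f ` moved S l l'"
  by (simp add: moved_def image_set_diff lattice_aut_inj)

lemma no_holes_image:
  assumes f: "lattice_aut f" shows "no_holes (f ` S) \<longleftrightarrow> no_holes S"
proof -
  have inj: "inj f" and surj: "surj f" using f by (simp_all add: lattice_aut_def bij_is_surj bij_is_inj)
  have fin: "finite (f ` X) \<longleftrightarrow> finite X" for X
    using inj by (simp add: finite_image_iff inj_on_subset)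
  have comp: "{y. path_in (- (f ` S)) (f x) y} = f ` {y. path_in (- S) x y}" for x
  proof (rule set_eqI)
    fix y
    obtain y0 where y: "y = f y0" using surj by (metis surjD)
    have "y \<in> {y. path_in (- (f ` S)) (f x) y} \<longleftrightarrow> path_in (f ` (- S)) (f x) (f y0)"
      by (simp add: y lattice_aut_image_Compl[OF f])
    also have "\<dots> \<longleftrightarrow> y \<in> f ` {y. path_in (- S) x y}"
      by (simp add: y path_in_image_iff[OF f] inj_image_mem_iff[OF inj])
    finally show "y \<in> {y. path_in (- (f ` S)) (f x) y} \<longleftrightarrow> y \<in> f ` {y. path_in (- S) x y}" .
  qed
  have "no_holes (f ` S) \<longleftrightarrow> (\<forall>x. f x \<notin> f ` S \<longrightarrow> infinite {y. path_in (- (f ` S)) (f x) y})"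
    unfolding no_holes_def by (metis surjD[OF surj])
  also have "\<dots> \<longleftrightarrow> no_holes S"
    unfolding comp fin no_holes_def by (simp add: inj_image_mem_iff[OF inj])
  finally show ?thesis .
qed

definition transl :: "loc \<Rightarrow> loc \<Rightarrow> loc" where
  "transl v p = addl p v"

definition rot60 :: "loc \<Rightarrow> loc" where
  "rot60 p = (- snd p, fst p + snd p)"

lemma lattice_aut_transl: "lattice_aut (transl v)"
proof -
  have "bij (transl v)"
    by (rule o_bij[where g = "transl (negl v)"]) (auto simp: transl_def addl_def negl_def fun_eq_iff)
  moreover have "(fst (transl v b) - fst (transl v a), snd (transl v b) - snd (transl v a))
      = (fst b - fst a, snd b - snd a)" for a b
    by (simp add: transl_def addl_def)
  ultimately show ?thesis unfolding lattice_aut_def adj_iff by simp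
qed

lemma lattice_aut_rot60: "lattice_aut rot60"
proof -
  have "bij rot60"
    by (rule o_bij[where g = "\<lambda>p. (fst p + snd p, - fst p)"]) (auto simp: rot60_def fun_eq_iff)
  moreover have "(fst (rot60 b) - fst (rot60 a), snd (rot60 b) - snd (rot60 a))
      = rot60 (fst b - fst a, snd b - snd a)" for a b
    by (simp add: rot60_def)
  moreover have "rot60 (x, y) \<in> dirs \<longleftrightarrow> (x, y) \<in> dirs" for x y
    by (auto simp: rot60_def dirs_def)
  ultimately show ?thesis unfolding lattice_aut_def adj_iff by simp
qed

lemma normalize_move:
  assumes "d \<in> dirs"
  shows "\<exists>f. lattice_aut f \<and> f l = (0,0) \<and> f (addl l d) = (1,0)"
proof -
  have "\<exists>k<6. (rot60 ^^ k) d = (1,0)"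
    using assms by (auto simp: dirs_def numeral_eq_Suc rot60_def Ex_less_Suc)
  then obtain k where k: "(rot60 ^^ k) d = (1,0)" by blast
  have "(rot60 ^^ k) (0,0) = (0,0)" by (induction k) (auto simp: rot60_def)
  moreover have "transl (negl l) l = (0,0)" "transl (negl l) (addl l d) = d"
    by (auto simp: transl_def addl_def negl_def)
  moreover have "lattice_aut ((rot60 ^^ k) \<circ> transl (negl l))"
    by (intro lattice_aut_comp lattice_aut_funpow lattice_aut_rot60 lattice_aut_transl)
  ultimately show ?thesis using k by (metis comp_apply)
qed

section \<open>Moves from \<open>(0,0)\<close> to \<open>(1,0)\<close>\<close>

lemma adj_origin: "adj (0,0) q \<longleftrightarrow> q \<in> {(1,0), (0,1), (-1,1), (-1,0), (0,-1), (1,-1)}"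
  by (simp add: adj_iff dirs_def)

lemma adj_east: "adj (1,0) q \<longleftrightarrow> q \<in> {(2,0), (1,1), (0,1), (0,0), (1,-1), (2,-1)}"
  by (cases q) (simp add: adj_iff dirs_def; arith)

text \<open>The eight locations adjacent to \<open>(0,0)\<close> or \<open>(1,0)\<close>, listed along the cycle they form;
  \<open>(0,1)\<close> and \<open>(1,-1)\<close> are the two common neighbours.\<close>

definition move_ring :: "loc set" where
  "move_ring = {(0,1), (1,1), (2,0), (2,-1), (1,-1), (0,-1), (-1,0), (-1,1)}"

lemma Nb_common_std: "Nb S (0,0) \<inter> Nb S (1,0) = {q \<in> {(0,1), (1,-1)}. q \<in> S}"
  unfolding Nb_def adj_origin adj_east by (auto simp: prod_eq_iff)

lemma Nb_union_std: "(Nb S (0,0) \<union> Nb S (1,0)) - {(0,0), (1,0)} = {q \<in> move_ring. q \<in> S}"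
  unfolding Nb_def adj_origin adj_east move_ring_def by (auto simp: prod_eq_iff)

lemma property1_no_stranded_run:
  assumes "property1 S (0,0) (1,0)" "p \<in> K" "p \<in> S" "p \<in> move_ring"
    and "\<forall>k\<in>K. \<forall>q\<in>move_ring. q \<in> S \<longrightarrow> adj k q \<longrightarrow> q \<in> K"
    and "(0,1) \<notin> K" "(1,-1) \<notin> K"
  shows False
proof -
  let ?U = "(Nb S (0,0) \<union> Nb S (1,0)) - {(0,0), (1,0)}"
  let ?C = "Nb S (0,0) \<inter> Nb S (1,0)"
  have "p \<in> ?U" using assms(3,4) by (simp only: Nb_union_std) simp
  then obtain s where s: "s \<in> ?C" "path_in ?U p s"
    using assms(1) unfolding property1_def Let_def by blast
  have "s \<in> K"
    by (rule path_in_closed[OF s(2) assms(2)]) (use assms(5) in \<open>simp only: Nb_union_std, blast\<close>)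
  moreover have "s \<in> {(0,1), (1,-1)}" using s(1) by (simp only: Nb_common_std) blast
  ultimately show False using assms(6,7) by blast
qed

lemma property1_std:
  assumes P: "property1 S (0,0) (1,0)"
  shows "(0,1) \<in> S \<or> (1,-1) \<in> S"
    and "(1,1) \<in> S \<Longrightarrow> (0,1) \<in> S \<or> (2,0) \<in> S"
    and "(2,0) \<in> S \<Longrightarrow> (1,1) \<in> S \<or> (2,-1) \<in> S"
    and "(2,-1) \<in> S \<Longrightarrow> (2,0) \<in> S \<or> (1,-1) \<in> S"
    and "(1,1) \<in> S \<Longrightarrow> (2,0) \<in> S \<Longrightarrow> (0,1) \<in> S \<or> (2,-1) \<in> S"
    and "(2,0) \<in> S \<Longrightarrow> (2,-1) \<in> S \<Longrightarrow> (1,1) \<in> S \<or> (1,-1) \<in> S"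
proof -
  have "card (Nb S (0,0) \<inter> Nb S (1,0)) \<in> {1, 2}"
    using P unfolding property1_def Let_def by blast
  then have "Nb S (0,0) \<inter> Nb S (1,0) \<noteq> {}" by auto
  then show "(0,1) \<in> S \<or> (1,-1) \<in> S" unfolding Nb_common_std by blast
  note run = property1_no_stranded_run[OF P]
  show "(1,1) \<in> S \<Longrightarrow> (0,1) \<in> S \<or> (2,0) \<in> S"
    using run[of "(1,1)" "{(1,1)}"] by (auto simp: move_ring_def adj_iff dirs_def)
  show "(2,0) \<in> S \<Longrightarrow> (1,1) \<in> S \<or> (2,-1) \<in> S"
    using run[of "(2,0)" "{(2,0)}"] by (auto simp: move_ring_def adj_iff dirs_def)
  show "(2,-1) \<in> S \<Longrightarrow> (2,0) \<in> S \<or> (1,-1) \<in> S"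
    using run[of "(2,-1)" "{(2,-1)}"] by (auto simp: move_ring_def adj_iff dirs_def)
  show "(1,1) \<in> S \<Longrightarrow> (2,0) \<in> S \<Longrightarrow> (0,1) \<in> S \<or> (2,-1) \<in> S"
    using run[of "(1,1)" "{(1,1), (2,0)}"] by (auto simp: move_ring_def adj_iff dirs_def)
  show "(2,0) \<in> S \<Longrightarrow> (2,-1) \<in> S \<Longrightarrow> (1,1) \<in> S \<or> (1,-1) \<in> S"
    using run[of "(2,0)" "{(2,0), (2,-1)}"] by (auto simp: move_ring_def adj_iff dirs_def)
qed

lemma property2_std:
  assumes P: "property2 S (0,0) (1,0)"
  shows "(0,1) \<notin> S" "(1,-1) \<notin> S"
    and "(1,1) \<in> S \<Longrightarrow> (2,-1) \<in> S \<Longrightarrow> (2,0) \<in> S"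
proof -
  show c: "(0,1) \<notin> S" "(1,-1) \<notin> S"
    using P unfolding property2_def Nb_common_std by (auto simp: card_insert_if)
  assume occ: "(1,1) \<in> S" "(2,-1) \<in> S"
  show "(2,0) \<in> S"
  proof (rule ccontr)
    assume "(2,0) \<notin> S"
    let ?N = "Nb S (1,0) - {(0,0)}"
    have "(1,1) \<in> ?N" "(2,-1) \<in> ?N" using occ by (simp_all add: Nb_def adj_iff dirs_def)
    then have p: "path_in ?N (1,1) (2,-1)"
      using P unfolding property2_def lconnected_def by blast
    have "((2,-1) :: loc) \<in> {(1,1)}"
    proof (rule path_in_closed[OF p])
      fix k q assume "k \<in> {(1,1)}" "q \<in> ?N" "adj k q"
      then show "q \<in> {(1,1)}" using c \<open>(2,0) \<notin> S\<close> unfolding Nb_def adj_east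
        by (auto simp: adj_iff dirs_def)
    qed simp
    then show False by simp
  qed
qed

text \<open>Around \<open>(1,0)\<close> the neighbours \<open>(0,0), (0,1), (1,1), (2,0), (2,-1), (1,-1)\<close> form a
  6-cycle; after the move \<open>(0,0)\<close> is empty, and Properties 1 and 2 force the empty locations
  on this cycle to form a single arc.\<close>

lemma empty_nbr_reaches_origin_std:
  assumes "(0,0) \<in> S" and P: "property1 S (0,0) (1,0) \<or> property2 S (0,0) (1,0)"
    and common: "(0,1) \<notin> S \<or> (1,-1) \<notin> S"
    and x: "x \<notin> S" "adj (1,0) x"
  shows "path_in (- moved S (0,0) (1,0)) x (0,0)"
proof -
  define B where "B = - moved S (0,0) (1,0)"
  have e01_00: "(0,1) \<notin> S \<Longrightarrow> path_in B (0,1) (0,0)"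
    by (rule path_in_step) (simp_all add: B_def moved_def adj_iff dirs_def)
  have e1m_00: "(1,-1) \<notin> S \<Longrightarrow> path_in B (1,-1) (0,0)"
    by (rule path_in_step) (simp_all add: B_def moved_def adj_iff dirs_def)
  have e11_01: "(1,1) \<notin> S \<Longrightarrow> (0,1) \<notin> S \<Longrightarrow> path_in B (1,1) (0,1)"
    by (rule path_in_step) (simp_all add: B_def moved_def adj_iff dirs_def)
  have e11_20: "(1,1) \<notin> S \<Longrightarrow> (2,0) \<notin> S \<Longrightarrow> path_in B (1,1) (2,0)"
    by (rule path_in_step) (simp_all add: B_def moved_def adj_iff dirs_def)
  have e20_2m: "(2,0) \<notin> S \<Longrightarrow> (2,-1) \<notin> S \<Longrightarrow> path_in B (2,0) (2,-1)"
    by (rule path_in_step) (simp_all add: B_def moved_def adj_iff dirs_def)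
  have e2m_1m: "(2,-1) \<notin> S \<Longrightarrow> (1,-1) \<notin> S \<Longrightarrow> path_in B (2,-1) (1,-1)"
    by (rule path_in_step) (simp_all add: B_def moved_def adj_iff dirs_def)
  note tr = path_in_trans[of B]
  have P1: "property1 S (0,0) (1,0)" if "(0,1) \<in> S \<or> (1,-1) \<in> S"
    using P that property2_std(1,2) by blast
  have "x \<in> {(2,0), (1,1), (0,1), (1,-1), (2,-1)}"
    using x \<open>(0,0) \<in> S\<close> unfolding adj_east by auto
  then consider (c01) "x = (0,1)" | (c1m) "x = (1,-1)" | (c11) "x = (1,1)" | (c2m) "x = (2,-1)"
    | (c20) "x = (2,0)"
    by blast
  then have "path_in B x (0,0)"
  proof cases
    case c11
    show ?thesis
    proof (cases "(0,1) \<in> S")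
      case True
      then have "(1,-1) \<notin> S" using common by blast
      moreover have "(2,0) \<notin> S" "(2,-1) \<notin> S"
        using property1_std(3,4,6)[OF P1] True \<open>(1,-1) \<notin> S\<close> x(1) c11 by blast+
      ultimately show ?thesis
        using c11 x(1) tr[OF e11_20 tr[OF e20_2m tr[OF e2m_1m e1m_00]]] by blast
    qed (use c11 x(1) tr[OF e11_01 e01_00] in blast)
  next
    case c2m
    show ?thesis
    proof (cases "(1,-1) \<in> S")
      case True
      then have "(0,1) \<notin> S" using common by blast
      moreover have "(2,0) \<notin> S" "(1,1) \<notin> S"
        using property1_std(2,3,5)[OF P1] True \<open>(0,1) \<notin> S\<close> x(1) c2m by blast+
      ultimately show ?thesis
        using c2m x(1) tr[OF path_in_sym[OF e20_2m] tr[OF path_in_sym[OF e11_20] tr[OF e11_01 e01_00]]]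
        by blast
    qed (use c2m x(1) tr[OF e2m_1m e1m_00] in blast)
  next
    case c20
    have "(1,1) \<notin> S \<and> (0,1) \<notin> S \<or> (2,-1) \<notin> S \<and> (1,-1) \<notin> S"
      using P property1_std(2,4)[of S] property2_std[of S] common x(1) c20 by blast
    then show ?thesis
      using c20 x(1) tr[OF path_in_sym[OF e11_20] tr[OF e11_01 e01_00]]
        tr[OF e20_2m tr[OF e2m_1m e1m_00]]
      by blast
  qed (use x(1) e01_00 e1m_00 in simp_all)
  then show ?thesis by (simp add: B_def)
qed

lemma empty_nbrs_connected_std:
  assumes "(0,0) \<in> S" and P: "property1 S (0,0) (1,0) \<or> property2 S (0,0) (1,0)"
    and u: "u \<notin> S" "adj (1,0) u" and w: "w \<notin> S" "adj (1,0) w"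
  shows "path_in (- moved S (0,0) (1,0)) u w"
proof (cases "(0,1) \<in> S \<and> (1,-1) \<in> S")
  case False
  then show ?thesis using empty_nbr_reaches_origin_std[OF assms(1) P] u w
    by (meson path_in_sym path_in_trans)
next
  case True
  define B where "B = - moved S (0,0) (1,0)"
  have P1: "property1 S (0,0) (1,0)" using P True property2_std(1) by blast
  have far: "x \<in> {(1,1), (2,0), (2,-1)}" if "x \<notin> S" "adj (1,0) x" for x
    using that True \<open>(0,0) \<in> S\<close> unfolding adj_east by auto
  show ?thesis
  proof (cases "(2,0) \<in> S")
    case False
    have "path_in B x (2,0)" if "x \<in> {(1,1), (2,0), (2,-1)}" "x \<notin> S" for x
      using that False by (auto simp: B_def moved_def adj_iff dirs_def intro: path_in_step)
    then show ?thesis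
      unfolding B_def[symmetric] using far u w by (meson path_in_sym path_in_trans)
  next
    case True
    then have "u = w" using far[OF u] far[OF w] u(1) w(1) property1_std(3)[OF P1] by auto
    then show ?thesis by simp
  qed
qed

section \<open>Valid moves\<close>

lemma tri_split:
  assumes "finite X"
  shows "tri X = card {T. face T \<and> T \<subseteq> X - {x}} + tri_at X x"
proof -
  have split: "{T. face T \<and> T \<subseteq> X}
      = {T. face T \<and> T \<subseteq> X - {x}} \<union> {T. face T \<and> x \<in> T \<and> T \<subseteq> X}"
    by auto
  have "finite {T. face T \<and> T \<subseteq> X - {x}}" "finite {T. face T \<and> x \<in> T \<and> T \<subseteq> X}"
    using assms by (auto intro: finite_subset[of _ "Pow X"])
  then show ?thesis unfolding tri_def tri_at_def split by (rule card_Un_disjoint) auto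
qed

locale valid_move =
  fixes S :: "loc set" and l d :: loc
  assumes finite: "finite S" and conn: "lconnected S" and no_holes: "no_holes S"
    and source: "l \<in> S" and dir: "d \<in> dirs" and target: "addl l d \<notin> S"
    and move_ok: "move_ok S l (addl l d)"
begin

abbreviation "l' \<equiv> addl l d"
abbreviation "S' \<equiv> moved S l l'"

lemma adj_source_target: "adj l l'"
  using dir by (auto simp: adj_def)

lemma source_ne_target: "l \<noteq> l'"
  using source target by auto

lemma properties: "property1 S l l' \<or> property2 S l l'"
  using move_ok by (simp add: move_ok_def)

lemma Nb_moved_target: "Nb S' l' = Nb S l' - {l}"
  using adj_irrefl[of l'] by (auto simp: moved_def Nb_def)

lemma Nb_moved_source: "Nb S' l = insert l' (Nb S l)"
  using adj_irrefl[of l] adj_source_target by (auto simp: moved_def Nb_def)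

lemma moved_back: "moved S' l' l = S"
  using source target source_ne_target by (auto simp: moved_def)

lemma finite_moved: "finite S'"
  using finite by (simp add: moved_def)

lemma card_moved: "card S' = card S"
proof -
  have "card S > 0" using finite source card_gt_0_iff by blast
  then show ?thesis using finite source target by (simp add: moved_def card_insert_if)
qed

lemma empty_nbrs_target_connected:
  assumes "u \<notin> S" "w \<notin> S" "adj l' u" "adj l' w"
  shows "path_in (- S') u w"
proof -
  obtain f where f: "lattice_aut f" "f l = (0,0)" "f l' = (1,0)"
    using normalize_move[OF dir] by blast
  have mem: "f x \<in> f ` S \<longleftrightarrow> x \<in> S" for x
    using f(1) by (simp add: lattice_aut_inj inj_image_mem_iff)
  have "path_in (- moved (f ` S) (0,0) (1,0)) (f u) (f w)"
  proof (rule empty_nbrs_connected_std)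
    show "property1 (f ` S) (0,0) (1,0) \<or> property2 (f ` S) (0,0) (1,0)"
      using properties property1_image[OF f(1)] property2_image[OF f(1)] f(2,3) by metis
  qed (use source assms f mem lattice_aut_adj[OF f(1)] in metis)+
  moreover have "- moved (f ` S) (0,0) (1,0) = f ` (- S')"
    using lattice_aut_image_Compl[OF f(1)] moved_image[OF f(1)] f(2,3) by metis
  ultimately show ?thesis using path_in_image_iff[OF f(1)] by metis
qed

lemma source_has_empty_nbr: "\<exists>v. adj l v \<and> v \<noteq> l' \<and> v \<notin> S"
proof (rule ccontr)
  assume "\<not> ?thesis"
  then have "Nb S l = addl l ` dirs - {l'}"
    using Nb_subset_nbrs[of S l] target by (auto simp: Nb_def adj_iff_nbr)
  then have "card (Nb S l) = 5" using card_nbrs_but_one[OF adj_source_target] by simp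
  then show False using move_ok by (simp add: move_ok_def)
qed

lemma infinite_component_moved:
  assumes "x \<notin> S" "x \<noteq> l'"
  shows "infinite {y. path_in (- S') x y}"
proof -
  have sub: "- S - {l'} \<subseteq> - S'" by (auto simp: moved_def)
  have "{y. path_in (- S) x y} - {l'} \<subseteq> {y. path_in (- S') x y}"
  proof
    fix y assume y: "y \<in> {y. path_in (- S) x y} - {l'}"
    have "path_in (- S') x y"
    proof (rule path_in_detour[OF sub])
      show "path_in (- S') u w" if "u \<in> - S" "w \<in> - S" "adj l' u" "adj l' w" for u w
        using that empty_nbrs_target_connected by simp
    qed (use y assms(2) in auto)
    then show "y \<in> {y. path_in (- S') x y}" by simp
  qed
  moreover have "infinite {y. path_in (- S) x y}"
    using no_holes assms(1) unfolding no_holes_def by blast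
  then have "infinite ({y. path_in (- S) x y} - {l'})" by simp
  ultimately show ?thesis using finite_subset by blast
qed

lemma no_holes_moved: "no_holes S'"
  unfolding no_holes_def
proof (intro allI impI)
  fix x assume x: "x \<notin> S'"
  show "infinite {y. path_in (- S') x y}"
  proof (cases "x = l")
    case False
    then show ?thesis using x infinite_component_moved by (auto simp: moved_def)
  next
    case True
    obtain v where v: "adj l v" "v \<noteq> l'" "v \<notin> S" using source_has_empty_nbr by blast
    have "path_in (- S') x v" using v True x by (intro path_in_step) (auto simp: moved_def)
    then have "{y. path_in (- S') v y} \<subseteq> {y. path_in (- S') x y}"
      using path_in_trans by blast
    then show ?thesis using infinite_component_moved[OF v(3,2)] finite_subset by blast
  qed
qed

lemma occupied_nbrs_source_connected:
  assumes "u \<in> S" "w \<in> S" "adj l u" "adj l w"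
  shows "path_in S' u w"
proof -
  have uw: "u \<in> Nb S l" "w \<in> Nb S l" using assms by (auto simp: Nb_def)
  have ne: "u \<noteq> l" "w \<noteq> l" "u \<noteq> l'" "w \<noteq> l'"
    using assms(3,4) adj_irrefl[of l] assms(1,2) target by blast+
  show ?thesis
  proof (cases "property1 S l l'")
    case True
    let ?U = "(Nb S l \<union> Nb S l') - {l, l'}"
    let ?C = "Nb S l \<inter> Nb S l'"
    have reach: "\<forall>p\<in>?U. \<exists>s\<in>?C. path_in ?U p s"
      using True unfolding property1_def Let_def by (rule conjunct2)
    have U_sub: "?U \<subseteq> S'" unfolding moved_def Nb_def by auto
    have to_target: "path_in S' p l'" if "p \<in> ?U" for p
    proof -
      from bspec[OF reach that] obtain s where s: "s \<in> ?C" "path_in ?U p s" ..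
      have "s \<in> S" "adj l s" "adj l' s" using s(1) unfolding Nb_def by auto
      then have "path_in S' s l'"
        using adj_irrefl[of l] adj_sym[of l' s] by (intro path_in_step) (auto simp: moved_def)
      with path_in_mono[OF s(2) U_sub] show ?thesis by (rule path_in_trans)
    qed
    have "u \<in> ?U" "w \<in> ?U" using uw ne by auto
    then have "path_in S' u l'" "path_in S' w l'" using to_target by blast+
    then show ?thesis using path_in_trans path_in_sym by blast
  next
    case False
    then have "lconnected (Nb S l - {l'})" using properties unfolding property2_def by blast
    then have "path_in (Nb S l - {l'}) u w" using uw ne unfolding lconnected_def by blast
    moreover have "Nb S l - {l'} \<subseteq> S'"
      unfolding moved_def Nb_def using adj_irrefl[of l] by auto
    ultimately show ?thesis using path_in_mono by blast
  qed
qed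

lemma target_has_occupied_nbr: "\<exists>z. z \<in> S \<and> z \<noteq> l \<and> adj l' z"
proof (cases "property1 S l l'")
  case True
  then have "Nb S l \<inter> Nb S l' \<noteq> {}" unfolding property1_def Let_def by auto
  then show ?thesis using adj_irrefl[of l] unfolding Nb_def by blast
next
  case False
  then have "Nb S l' - {l} \<noteq> {}" using properties unfolding property2_def by blast
  then show ?thesis by (auto simp: Nb_def)
qed

lemma lconnected_moved: "lconnected S'"
proof -
  obtain z where z: "z \<in> S" "z \<noteq> l" "adj l' z" using target_has_occupied_nbr by blast
  have to_target: "path_in S' a l'" if "a \<in> S'" for a
  proof (cases "a = l'")
    case False
    then have "a \<in> S" "a \<noteq> l" using that by (auto simp: moved_def)
    have "path_in S a z" using conn \<open>a \<in> S\<close> z(1) unfolding lconnected_def by blast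
    have "path_in S' a z"
    proof (rule path_in_detour[of S l S' a z])
      show "S - {l} \<subseteq> S'" by (auto simp: moved_def)
    qed (use occupied_nbrs_source_connected \<open>path_in S a z\<close> \<open>a \<noteq> l\<close> z(2) in simp_all)
    moreover have "path_in S' z l'"
      using z by (intro path_in_step) (use adj_sym[OF z(3)] in \<open>auto simp: moved_def\<close>)
    ultimately show ?thesis by (rule path_in_trans)
  qed simp
  show ?thesis
    unfolding lconnected_def using to_target path_in_trans path_in_sym by blast
qed

text \<open>If \<open>l'\<close> had five occupied neighbours after the move, it would have been an enclosed hole
  before it.\<close>

lemma card_Nb_moved_target_ne_5: "card (Nb S' l') \<noteq> 5"
proof
  assume c: "card (Nb S' l') = 5"
  have "Nb S' l' \<subseteq> addl l' ` dirs - {l}"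
    unfolding Nb_moved_target using Nb_subset_nbrs by blast
  then have eq: "Nb S' l' = addl l' ` dirs - {l}"
    using c card_nbrs_but_one[OF adj_sym[OF adj_source_target]]
    by (intro card_subset_eq) simp_all
  have occupied: "q \<in> S" if "adj l' q" for q
    using that eq source unfolding Nb_moved_target by (cases "q = l") (auto simp: adj_iff_nbr Nb_def)
  have "{y. path_in (- S) l' y} \<subseteq> {l'}"
  proof
    fix y assume "y \<in> {y. path_in (- S) l' y}"
    then have "path_in (- S) l' y" by simp
    then show "y \<in> {l'}" by (rule path_in_closed) (auto dest: occupied)
  qed
  then have "finite {y. path_in (- S) l' y}" using finite_subset by blast
  then show False using no_holes target unfolding no_holes_def by blast
qed

lemma move_ok_reverse: "move_ok S' l' l"
proof -
  have C: "Nb S' l' \<inter> Nb S' l = Nb S l \<inter> Nb S l'"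
    unfolding Nb_moved_target Nb_moved_source
    using adj_irrefl[of l] adj_irrefl[of l'] by (auto simp: Nb_def)
  have U: "(Nb S' l' \<union> Nb S' l) - {l', l} = (Nb S l \<union> Nb S l') - {l, l'}"
    unfolding Nb_moved_target Nb_moved_source by auto
  have D: "Nb S' l' - {l} = Nb S l' - {l}" "Nb S' l - {l'} = Nb S l - {l'}"
    unfolding Nb_moved_target Nb_moved_source using adj_irrefl[of l] by (auto simp: Nb_def)
  have "property1 S' l' l \<longleftrightarrow> property1 S l l'"
    unfolding property1_def Let_def C U ..
  moreover have "property2 S' l' l \<longleftrightarrow> property2 S l l'"
    unfolding property2_def C D by blast
  ultimately show ?thesis
    using card_Nb_moved_target_ne_5 properties by (simp add: move_ok_def)
qed

text \<open>The faces not containing the moving particle are the same before and after the move;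
  if there are \<open>B\<close> of them, both sides equal \<open>min (\<lambda>^(B+t)) (\<lambda>^(B+t'))\<close>.\<close>

lemma weight_acc_reverse:
  assumes lam: "lam > 0"
  shows "lam ^ tri S * acc lam S l l' = lam ^ tri S' * acc lam S' l' l"
proof -
  define B where "B = card {T. face T \<and> T \<subseteq> S - {l}}"
  define a where "a = tri_at S l"
  define b where "b = tri_at S' l'"
  have tS: "tri S = B + a" unfolding B_def a_def by (rule tri_split[OF finite])
  have "S' - {l'} = S - {l}" using target source_ne_target by (auto simp: moved_def)
  then have tS': "tri S' = B + b" unfolding B_def b_def using tri_split[OF finite_moved, of l'] by simp
  have shift: "lam ^ (B + x) * min 1 (lam powi (int y - int x)) = min (lam ^ (B + x)) (lam ^ (B + y))"
    for x y
  proof -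
    have "lam ^ (B + x) * lam powi (int y - int x) = lam powi int (B + x) * lam powi (int y - int x)"
      by (simp only: power_int_of_nat)
    also have "\<dots> = lam powi (int (B + x) + (int y - int x))"
      by (rule power_int_add[symmetric]) (use lam in simp)
    also have "int (B + x) + (int y - int x) = int (B + y)" by simp
    finally have "lam ^ (B + x) * lam powi (int y - int x) = lam ^ (B + y)"
      by (simp only: power_int_of_nat)
    then show ?thesis using lam by (simp add: min_mult_distrib_left)
  qed
  have "lam ^ tri S * acc lam S l l' = min (lam ^ (B + a)) (lam ^ (B + b))"
    unfolding tS acc_def a_def[symmetric] b_def[symmetric] by (rule shift)
  moreover have "lam ^ tri S' * acc lam S' l' l = min (lam ^ (B + b)) (lam ^ (B + a))"
    unfolding tS' acc_def moved_back a_def[symmetric] b_def[symmetric] by (rule shift)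
  ultimately show ?thesis by (simp add: min.commute)
qed

end

section \<open>Translations and configurations\<close>

lemma transl_addl: "transl v (addl a e) = addl (transl v a) e"
  by (simp add: transl_def addl_def)

lemma transl_transl: "transl w (transl v x) = transl (addl v w) x"
  by (simp add: transl_def addl_def)

lemma inj_transl: "inj (transl v)"
  using lattice_aut_inj[OF lattice_aut_transl] .

lemma transl_mem_image [simp]: "transl v x \<in> transl v ` S \<longleftrightarrow> x \<in> S"
  by (simp add: inj_image_mem_iff inj_transl)

lemma face_transl:
  assumes "face T" shows "face (transl v ` T)"
proof -
  obtain a where "T = {a, addl a (1,0), addl a (0,1)} \<or> T = {a, addl a (1,0), addl a (1,-1)}"
    using assms unfolding face_def by blast
  then show ?thesis
    unfolding face_def by (intro exI[of _ "transl v a"]) (auto simp: transl_addl)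
qed

lemma card_faces_transl:
  "card {T. face T \<and> P (transl v ` T)} = card {T. face T \<and> P T}"
proof -
  have "{T. face T \<and> P T} = (\<lambda>T. transl v ` T) ` {T. face T \<and> P (transl v ` T)}"
  proof (intro equalityI subsetI)
    fix T assume T: "T \<in> {T. face T \<and> P T}"
    then have "transl v ` transl (negl v) ` T = T"
      by (simp add: image_image transl_def addl_def negl_def)
    then show "T \<in> (\<lambda>T. transl v ` T) ` {T. face T \<and> P (transl v ` T)}"
      using T face_transl[of T "negl v"] by (intro image_eqI[of _ _ "transl (negl v) ` T"]) auto
  qed (auto intro: face_transl)
  moreover have "inj_on (\<lambda>T. transl v ` T) X" for X
    by (meson inj_image_eq_iff inj_onI inj_transl)
  ultimately show ?thesis by (simp add: card_image)
qed

lemma tri_transl: "tri (transl v ` S) = tri S"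
  unfolding tri_def by (subst card_faces_transl[symmetric, of _ v]) (simp add: inj_image_subset_iff inj_transl)

lemma tri_at_transl: "tri_at (transl v ` S) (transl v l) = tri_at S l"
  unfolding tri_at_def by (subst card_faces_transl[symmetric, of _ v]) (simp add: inj_image_subset_iff inj_transl)

text \<open>A translation is determined by its action on any finite nonempty set: it shifts the
  coordinate sums by \<open>|X|\<close> times its vector.\<close>

lemma transl_image_inj:
  assumes "finite X" "X \<noteq> {}" "transl u ` X = transl u' ` X"
  shows "u = u'"
proof -
  have sums: "(\<Sum>p\<in>transl w ` X. fst p) = (\<Sum>p\<in>X. fst p) + int (card X) * fst w"
    "(\<Sum>p\<in>transl w ` X. snd p) = (\<Sum>p\<in>X. snd p) + int (card X) * snd w" for w
    unfolding sum.reindex[OF inj_on_subset[OF inj_transl subset_UNIV]] comp_def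
    by (simp_all add: transl_def addl_def sum.distrib)
  have "int (card X) \<noteq> 0" using assms(1,2) by simp
  then show ?thesis using sums[of u] sums[of u'] assms(3) by (simp add: prod_eq_iff)
qed

lemma cls_mem_iff: "Y \<in> cls X \<longleftrightarrow> (\<exists>w. Y = transl w ` X)"
  by (simp add: cls_def shift_def transl_def)

lemma mem_cls_self: "X \<in> cls X"
  unfolding cls_mem_iff by (intro exI[of _ "(0,0)"]) (simp add: transl_def addl_def)

lemma cls_transl: "cls (transl v ` X) = cls X"
proof -
  have "transl w ` transl v ` X = transl (addl v w) ` X" for w
    by (simp add: image_image transl_transl)
  moreover have "transl w ` X = transl (addl (negl v) w) ` transl v ` X" for w
    by (simp add: image_image transl_transl) (simp add: transl_def addl_def negl_def)
  ultimately show ?thesis unfolding set_eq_iff cls_mem_iff by metis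
qed

lemma cls_eq_iff: "cls X = cls Y \<longleftrightarrow> (\<exists>w. Y = transl w ` X)"
  using cls_transl mem_cls_self cls_mem_iff by metis

definition transl_vec :: "loc set \<Rightarrow> loc set \<Rightarrow> loc" where
  "transl_vec X Y = (SOME w. Y = transl w ` X)"

lemma transl_vec: "cls X = cls Y \<Longrightarrow> Y = transl (transl_vec X Y) ` X"
  unfolding transl_vec_def cls_eq_iff by (rule someI_ex)

lemma rep_eq_transl: "\<exists>w. rep (cls X) = transl w ` X"
proof -
  have "rep (cls X) \<in> cls X" unfolding rep_def by (rule someI[of _ X]) (rule mem_cls_self)
  then show ?thesis by (simp add: cls_mem_iff)
qed

definition config :: "nat \<Rightarrow> loc set \<Rightarrow> bool" where
  "config n X \<longleftrightarrow> finite X \<and> card X = n \<and> lconnected X \<and> no_holes X"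

lemma Omega_eq: "Omega n = cls ` Collect (config n)"
  by (auto simp: Omega_def config_def)

lemma config_transl: "config n (transl v ` X) \<longleftrightarrow> config n X"
  using lattice_aut_transl[of v]
  by (simp add: config_def finite_image_iff inj_on_subset[OF inj_transl] lattice_aut_card_image
      lconnected_image no_holes_image)

lemma config_rep:
  assumes "\<sigma> \<in> Omega n" shows "config n (rep \<sigma>)" and "cls (rep \<sigma>) = \<sigma>"
proof -
  obtain S where S: "\<sigma> = cls S" "config n S" using assms by (auto simp: Omega_eq)
  obtain w where "rep \<sigma> = transl w ` S" using rep_eq_transl S(1) by blast
  then show "config n (rep \<sigma>)" "cls (rep \<sigma>) = \<sigma>" using S by (simp_all add: config_transl cls_transl)
qed

lemma step_prob_transl: "step_prob lam (transl v ` S) \<tau> = step_prob lam S \<tau>"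
proof -
  have "acc lam (transl v ` S) (transl v p) (transl v q) = acc lam S p q" for p q
    by (simp add: acc_def moved_image[OF lattice_aut_transl] tri_at_transl)
  then show ?thesis
    unfolding step_prob_def lattice_aut_card_image[OF lattice_aut_transl]
      sum.reindex[OF inj_on_subset[OF inj_transl subset_UNIV]] comp_def
    by (intro sum.cong refl)
       (simp add: transl_addl[symmetric] Let_def move_ok_image[OF lattice_aut_transl]
         moved_image[OF lattice_aut_transl] cls_transl)
qed

lemma Pchain_cls: "cls X = \<sigma> \<Longrightarrow> Pchain lam \<sigma> \<tau> = step_prob lam X \<tau>"
  unfolding Pchain_def using rep_eq_transl[of X] step_prob_transl by metis

lemma tcfg_cls: "cls X = \<sigma> \<Longrightarrow> tcfg \<sigma> = tri X"
  unfolding tcfg_def using rep_eq_transl[of X] tri_transl by metis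

lemma config_moved:
  assumes "config n X" "p \<in> X" "d \<in> dirs" "addl p d \<notin> X" "move_ok X p (addl p d)"
  shows "config n (moved X p (addl p d))"
proof -
  interpret valid_move X p d using assms unfolding config_def by unfold_locales auto
  show ?thesis
    using assms(1) finite_moved card_moved lconnected_moved no_holes_moved
    unfolding config_def by simp
qed

lemma relpow_adj_coord_bound:
  assumes "(a, b) \<in> R ^^ k" "R \<subseteq> {(x, y). adj x y}"
  shows "\<bar>fst b - fst a\<bar> \<le> int k \<and> \<bar>snd b - snd a\<bar> \<le> int k"
  using assms(1)
proof (induction k arbitrary: b)
  case (Suc k)
  then obtain c where c: "(a, c) \<in> R ^^ k" "(c, b) \<in> R" by auto
  then have "adj c b" using assms(2) by auto
  then have "\<bar>fst b - fst c\<bar> \<le> 1 \<and> \<bar>snd b - snd c\<bar> \<le> 1"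
    unfolding adj_iff dirs_def by auto
  then show ?case using Suc.IH[OF c(1)] by auto
qed simp

lemma path_in_coord_bound:
  assumes "finite A" "path_in A a b"
  shows "\<bar>fst b - fst a\<bar> \<le> int (card A * card A) \<and> \<bar>snd b - snd a\<bar> \<le> int (card A * card A)"
proof -
  let ?R = "{(x, y). x \<in> A \<and> y \<in> A \<and> adj x y}"
  have "?R \<subseteq> A \<times> A" by auto
  then have fin: "finite ?R" and card: "card ?R \<le> card A * card A"
    using assms(1) card_mono[of "A \<times> A" ?R] by (auto simp: card_cartesian_product finite_subset)
  have "(a, b) \<in> ?R\<^sup>*" using assms(2) unfolding path_in_def rtranclp_rtrancl_eq by simp
  then obtain k where k: "k \<le> card ?R" "(a, b) \<in> ?R ^^ k"
    using rtrancl_finite_eq_relpow[OF fin] by auto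
  have "\<bar>fst b - fst a\<bar> \<le> int k \<and> \<bar>snd b - snd a\<bar> \<le> int k"
    by (rule relpow_adj_coord_bound[OF k(2)]) auto
  then show ?thesis using k(1) card by linarith
qed

text \<open>Translated to contain the origin, a connected configuration of \<open>n\<close> particles lies in a
  fixed box.\<close>

lemma finite_Omega: "finite (Omega n)"
proof -
  define M where "M = int (n * n)"
  have "Omega n \<subseteq> cls ` Pow ({-M..M} \<times> {-M..M})"
  proof
    fix \<sigma> assume "\<sigma> \<in> Omega n"
    then obtain S where S: "\<sigma> = cls S" "config n S" by (auto simp: Omega_eq)
    show "\<sigma> \<in> cls ` Pow ({-M..M} \<times> {-M..M})"
    proof (cases "S = {}")
      case False
      then obtain s where s: "s \<in> S" by blast
      let ?S0 = "transl (negl s) ` S"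
      have S0: "config n ?S0" "(0,0) \<in> ?S0"
        using S(2) by (simp add: config_transl)
          (rule image_eqI[of _ _ s], simp_all add: s transl_def addl_def negl_def)
      have "?S0 \<subseteq> {-M..M} \<times> {-M..M}"
      proof
        fix x assume "x \<in> ?S0"
        then have "path_in ?S0 (0,0) x" using S0 unfolding config_def lconnected_def by blast
        then show "x \<in> {-M..M} \<times> {-M..M}"
          using path_in_coord_bound[of ?S0 "(0,0)" x] S0(1) unfolding config_def M_def
          by (cases x) auto
      qed
      moreover have "\<sigma> = cls ?S0" using S(1) cls_transl by simp
      ultimately show ?thesis by blast
    qed (use S in auto)
  qed
  then show ?thesis by (rule finite_subset) simp
qed

section \<open>Detailed balance and stationarity\<close>

definition moves_to :: "loc set \<Rightarrow> loc set set \<Rightarrow> (loc \<times> loc) set" where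
  "moves_to S \<tau> = {(p, d). p \<in> S \<and> d \<in> dirs \<and> addl p d \<notin> S \<and> move_ok S p (addl p d)
      \<and> cls (moved S p (addl p d)) = \<tau>}"

lemma ind_simps [simp]: "ind True = 1" "ind False = 0"
  by (simp_all add: ind_def)

lemma step_prob_off_diag:
  assumes "finite S" "cls S \<noteq> \<tau>"
  shows "step_prob lam S \<tau>
    = (\<Sum>(p, d)\<in>moves_to S \<tau>. acc lam S p (addl p d)) / (6 * real (card S))"
proof -
  let ?g = "\<lambda>(p, d). acc lam S p (addl p d)"
  have "step_prob lam S \<tau> = (\<Sum>p\<in>S. \<Sum>d\<in>dirs. (if (p, d) \<in> moves_to S \<tau> then ?g (p, d) else 0))
      / (6 * real (card S))"
    unfolding step_prob_def sum_divide_distrib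
    by (intro sum.cong refl) (use assms(2) in \<open>auto simp: moves_to_def Let_def\<close>)
  also have "(\<Sum>p\<in>S. \<Sum>d\<in>dirs. (if (p, d) \<in> moves_to S \<tau> then ?g (p, d) else 0))
      = sum ?g ((S \<times> dirs) \<inter> moves_to S \<tau>)"
    by (simp add: sum.cartesian_product sum.inter_restrict assms(1))
  also have "(S \<times> dirs) \<inter> moves_to S \<tau> = moves_to S \<tau>"
    by (auto simp: moves_to_def)
  finally show ?thesis .
qed

text \<open>The move from \<open>T\<close> undoing a move from \<open>S\<close> whose result is a translate of \<open>T\<close>.\<close>

definition reverse_move :: "loc set \<Rightarrow> loc set \<Rightarrow> loc \<times> loc \<Rightarrow> loc \<times> loc" where
  "reverse_move S T = (\<lambda>(p, d). (transl (transl_vec (moved S p (addl p d)) T) (addl p d), negl d))"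

locale move_between =
  fixes S T :: "loc set" and p d :: loc
  assumes finite: "finite S" and conn: "lconnected S" and no_holes: "no_holes S"
    and move: "(p, d) \<in> moves_to S (cls T)"
begin

sublocale valid_move S p d
  using finite conn no_holes move by unfold_locales (auto simp: moves_to_def)

definition shift_vec :: loc where
  "shift_vec = transl_vec S' T"

lemma T_eq: "T = transl shift_vec ` S'"
  unfolding shift_vec_def using move by (intro transl_vec) (simp add: moves_to_def)

lemma reverse_move_eq: "reverse_move S T (p, d) = (transl shift_vec l', negl d)"
  by (simp add: reverse_move_def shift_vec_def)

lemma reverse_target: "addl (transl shift_vec l') (negl d) = transl shift_vec p"
  by (simp add: transl_addl[symmetric] addl_negl)

lemma moved_reverse: "moved T (transl shift_vec l') (transl shift_vec p) = transl shift_vec ` S"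
proof -
  have "moved (transl shift_vec ` S') (transl shift_vec l') (transl shift_vec p)
      = transl shift_vec ` S"
    by (simp add: moved_image[OF lattice_aut_transl] moved_back)
  then show ?thesis by (simp only: T_eq[symmetric])
qed

lemma reverse_move_mem: "reverse_move S T (p, d) \<in> moves_to T (cls S)"
proof -
  have "transl shift_vec l' \<in> transl shift_vec ` S'"
    "transl shift_vec p \<notin> transl shift_vec ` S'"
    using source_ne_target by (simp_all add: moved_def inj_eq[OF inj_transl])
  moreover have "move_ok (transl shift_vec ` S') (transl shift_vec l') (transl shift_vec p)"
    using move_ok_reverse by (simp add: move_ok_image[OF lattice_aut_transl])
  ultimately have "transl shift_vec l' \<in> T" "transl shift_vec p \<notin> T"
      "move_ok T (transl shift_vec l') (transl shift_vec p)"
    unfolding T_eq[symmetric] by blast+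
  then show ?thesis
    using negl_dirs[OF dir] by (simp add: moves_to_def reverse_move_eq reverse_target moved_reverse cls_transl)
qed

lemma reverse_move_reverse: "reverse_move T S (reverse_move S T (p, d)) = (p, d)"
proof -
  let ?v = "transl_vec (transl shift_vec ` S) S"
  have "reverse_move T S (reverse_move S T (p, d)) = (transl ?v (transl shift_vec p), d)"
    unfolding reverse_move_eq by (simp add: reverse_move_def reverse_target moved_reverse)
  moreover have "transl (0,0) ` S = transl (addl shift_vec ?v) ` S"
    using transl_vec[of "transl shift_vec ` S" S] by (simp add: cls_transl image_image transl_transl)
      (simp add: transl_def addl_def)
  then have "addl shift_vec ?v = (0,0)"
    using transl_image_inj[OF finite] source by blast
  then have "transl ?v (transl shift_vec p) = p"
    by (simp add: transl_transl) (simp add: transl_def addl_def)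
  ultimately show ?thesis by simp
qed

lemma weight_reverse_move:
  assumes "lam > 0"
  shows "lam ^ tri T * (case reverse_move S T (p, d) of (q, e) \<Rightarrow> acc lam T q (addl q e))
    = lam ^ tri S * acc lam S p (addl p d)"
proof -
  have "acc lam (transl shift_vec ` S') (transl shift_vec l') (transl shift_vec p) = acc lam S' l' p"
    by (simp add: acc_def moved_image[OF lattice_aut_transl] tri_at_transl)
  then have "acc lam T (transl shift_vec l') (transl shift_vec p) = acc lam S' l' p"
    by (simp only: T_eq[symmetric])
  moreover have "tri T = tri S'" using tri_transl T_eq by metis
  ultimately show ?thesis
    using weight_acc_reverse[OF assms] by (simp add: reverse_move_eq reverse_target)
qed

end

lemma detailed_balance:
  assumes lam: "lam > 0" and \<sigma>: "\<sigma> \<in> Omega n" and \<tau>: "\<tau> \<in> Omega n"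
  shows "lam ^ tcfg \<sigma> * Pchain lam \<sigma> \<tau> = lam ^ tcfg \<tau> * Pchain lam \<tau> \<sigma>"
proof (cases "\<sigma> = \<tau>")
  case False
  define S T where "S = rep \<sigma>" and "T = rep \<tau>"
  have S: "config n S" "cls S = \<sigma>" and T: "config n T" "cls T = \<tau>"
    unfolding S_def T_def using config_rep \<sigma> \<tau> by blast+
  let ?w = "\<lambda>X. \<lambda>(q, e). lam ^ tri X * acc lam X q (addl q e)"
  have balance: "lam ^ tcfg (cls X) * Pchain lam (cls X) (cls Y)
      = (\<Sum>a\<in>moves_to X (cls Y). ?w X a) / (6 * real n)"
    if "config n X" "cls X \<noteq> cls Y" for X Y
    using that step_prob_off_diag[of X "cls Y" lam]
    by (simp add: config_def tcfg_cls Pchain_cls sum_distrib_left case_prod_unfold)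
  have "(\<Sum>a\<in>moves_to S (cls T). ?w S a) = (\<Sum>a\<in>moves_to T (cls S). ?w T a)"
  proof (rule sum.reindex_bij_witness[where i = "reverse_move T S" and j = "reverse_move S T"])
    fix a assume "a \<in> moves_to S (cls T)"
    then interpret move_between S T "fst a" "snd a"
      using S(1) by unfold_locales (auto simp: config_def)
    show "reverse_move T S (reverse_move S T a) = a"
      using reverse_move_reverse by simp
    show "reverse_move S T a \<in> moves_to T (cls S)"
      using reverse_move_mem by simp
    show "?w T (reverse_move S T a) = ?w S a"
      using weight_reverse_move[OF lam] by (simp add: case_prod_unfold)
  next
    fix b assume "b \<in> moves_to T (cls S)"
    then interpret move_between T S "fst b" "snd b"
      using T(1) by unfold_locales (auto simp: config_def)
    show "reverse_move S T (reverse_move T S b) = b"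
      using reverse_move_reverse by simp
    show "reverse_move T S b \<in> moves_to S (cls T)"
      using reverse_move_mem by simp
  qed
  moreover have "cls S \<noteq> cls T" using False S(2) T(2) by simp
  ultimately show ?thesis
    using balance[OF S(1), of T] balance[OF T(1), of S] unfolding S(2) T(2) by simp
qed simp

lemma Pchain_row_sum:
  assumes "n \<ge> 1" and \<tau>: "\<tau> \<in> Omega n"
  shows "(\<Sum>\<sigma>\<in>Omega n. Pchain lam \<tau> \<sigma>) = 1"
proof -
  define X where "X = rep \<tau>"
  have X: "config n X" using config_rep[OF \<tau>] by (simp add: X_def)
  define F where "F p d \<sigma> =
    (let l' = addl p d in
     if l' \<in> X then ind (cls X = \<sigma>)
     else if move_ok X p l'
       then acc lam X p l' * ind (cls (moved X p l') = \<sigma>) + (1 - acc lam X p l') * ind (cls X = \<sigma>)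
       else ind (cls X = \<sigma>))" for p d \<sigma>
  have sum_ind: "(\<Sum>\<sigma>\<in>Omega n. ind (Y = \<sigma>)) = 1" if "Y \<in> Omega n" for Y
    using that finite_Omega by (simp add: ind_def)
  have "cls X \<in> Omega n" using X by (auto simp: Omega_eq)
  note stay = sum_ind[OF this]
  have distribution: "(\<Sum>\<sigma>\<in>Omega n. F p d \<sigma>) = 1" if "p \<in> X" "d \<in> dirs" for p d
  proof (cases "addl p d \<in> X")
    case False
    show ?thesis
    proof (cases "move_ok X p (addl p d)")
      case True
      have "cls (moved X p (addl p d)) \<in> Omega n"
        using config_moved[OF X that False True] by (auto simp: Omega_eq)
      then show ?thesis
        using False True stay sum_ind by (simp add: F_def Let_def sum.distrib flip: sum_distrib_left)
    qed (use False stay in \<open>simp add: F_def Let_def\<close>)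
  qed (use stay in \<open>simp add: F_def Let_def\<close>)
  let ?c = "1 / (6 * real (card X))"
  have "(\<Sum>\<sigma>\<in>Omega n. Pchain lam \<tau> \<sigma>) = (\<Sum>\<sigma>\<in>Omega n. \<Sum>p\<in>X. \<Sum>d\<in>dirs. ?c * F p d \<sigma>)"
    unfolding Pchain_def step_prob_def F_def X_def ..
  also have "\<dots> = (\<Sum>p\<in>X. \<Sum>d\<in>dirs. ?c * (\<Sum>\<sigma>\<in>Omega n. F p d \<sigma>))"
    by (simp add: sum.swap[of _ "Omega n"] sum_distrib_left)
  also have "\<dots> = (\<Sum>p\<in>X. \<Sum>d\<in>dirs. ?c)"
    using distribution by simp
  also have "\<dots> = 1"
    using X assms(1) by (simp add: config_def card_dirs)
  finally show ?thesis .
qed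

theorem lemma16:
  fixes lam :: real and n :: nat
  assumes "lam > 0" and "n \<ge> 1"
  shows "finite (Omega n) \<and>
         (\<forall>\<tau>\<in>Omega n. (\<Sum>\<sigma>\<in>Omega n. piM lam n \<sigma> * Pchain lam \<sigma> \<tau>) = piM lam n \<tau>)"
proof (intro conjI ballI finite_Omega)
  fix \<tau> assume \<tau>: "\<tau> \<in> Omega n"
  have "(\<Sum>\<sigma>\<in>Omega n. piM lam n \<sigma> * Pchain lam \<sigma> \<tau>)
      = (\<Sum>\<sigma>\<in>Omega n. lam ^ tcfg \<sigma> * Pchain lam \<sigma> \<tau>) / Zpart lam n"
    by (simp add: piM_def sum_divide_distrib)
  also have "\<dots> = (\<Sum>\<sigma>\<in>Omega n. lam ^ tcfg \<tau> * Pchain lam \<tau> \<sigma>) / Zpart lam n"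
    using detailed_balance[OF assms(1) _ \<tau>] by simp
  also have "\<dots> = piM lam n \<tau>"
    using Pchain_row_sum[OF assms(2) \<tau>] by (simp add: piM_def flip: sum_distrib_left)
  finally show "(\<Sum>\<sigma>\<in>Omega n. piM lam n \<sigma> * Pchain lam \<sigma> \<tau>) = piM lam n \<tau>" .
qed

end
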